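(* Let $f:\mathbb{N}\to\mathbb{R}$ with $f(1)=1$ be multiplicative (i.e. $f(mn)=f(m)f(n)$ for coprime $m,n$). Assume there exist $C>0$ and $\gamma\in\mathbb{R}$ such that $|f(n)|\leq C n^\gamma$ for all $n\geq 2$. Then $|f^{-1}(n)| \leq n^{\gamma+\frac{\ln(1+C)}{\ln 2}}$ for all $n\geq2$.
   Context: $f^{-1}$ denotes the Dirichlet inverse of $f$: the arithmetic function with $\sum_{d\mid n} f(n/d) f^{-1}(d)=\varepsilon(n)$ for all $n$, where $\varepsilon(1)=1$ and $\varepsilon(n)=0$ for $n\ge2$. *)

theory Defs
  imports Complex_Main "HOL-Computational_Algebra.Primes"
begin

text \<open>Arithmetic functions are functions nat => real; only values at n >= 1 matter.\<close>

definition multiplicative_fn :: "(nat \<Rightarrow> real) \<Rightarrow> bool" where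
  "multiplicative_fn f \<longleftrightarrow>
     (\<forall>m n. m > 0 \<longrightarrow> n > 0 \<longrightarrow> coprime m n \<longrightarrow> f (m * n) = f m * f n)"

definition is_dirichlet_inverse :: "(nat \<Rightarrow> real) \<Rightarrow> (nat \<Rightarrow> real) \<Rightarrow> bool" where
  "is_dirichlet_inverse f g \<longleftrightarrow>
     (\<forall>n. n > 0 \<longrightarrow> (\<Sum>d\<in>{d. d dvd n}. f (n div d) * g d) = (if n = 1 then 1 else 0))"

end

theory Submission
  imports Defs
begin

(* The Dirichlet inverse g of a multiplicative f with f 1 = 1 is itself multiplicative, so it
   suffices to bound g on prime powers. There the defining identity gives the recurrence
   g(p^k) = -(sum of f(p^(k-j)) g(p^j) over j < k), and induction on k with the geometric sum
   C (1 + (1+C) + ... + (1+C)^(k-1)) = (1+C)^k - 1 yields |g(p^k)| <= p^(k gamma) (1+C)^k.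
   Finally (1+C)^k = 2^(k L) <= p^(k L) for L = log_2 (1+C). *)

lemma dirichlet_inverse_1:
  assumes "f 1 = 1" "is_dirichlet_inverse f g"
  shows "g 1 = 1"
proof -
  have "{d::nat. d dvd 1} = {1}" by auto
  with assms show ?thesis unfolding is_dirichlet_inverse_def by (auto dest: spec[of _ 1])
qed

lemma dirichlet_inverse_sum_eq_0:
  assumes "is_dirichlet_inverse f g" "n > 1"
  shows "(\<Sum>d\<in>{d. d dvd n}. f (n div d) * g d) = 0"
  using assms unfolding is_dirichlet_inverse_def by auto

lemma dirichlet_inverse_recurrence:
  assumes "f 1 = 1" "is_dirichlet_inverse f g" "n > 1"
  shows "g n = - (\<Sum>d\<in>{d. d dvd n} - {n}. f (n div d) * g d)"
proof -
  have "finite {d. d dvd n}" using assms(3) by (simp add: finite_divisors_nat)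
  then have "(\<Sum>d\<in>{d. d dvd n}. f (n div d) * g d)
      = f (n div n) * g n + (\<Sum>d\<in>{d. d dvd n} - {n}. f (n div d) * g d)"
    by (subst sum.remove[of _ n]) auto
  moreover have "(\<Sum>d\<in>{d. d dvd n}. f (n div d) * g d) = 0"
    using assms(2,3) by (rule dirichlet_inverse_sum_eq_0)
  ultimately show ?thesis using assms(1,3) by simp
qed

lemma multiplicative_fnD:
  "multiplicative_fn f \<Longrightarrow> coprime m n \<Longrightarrow> m > 0 \<Longrightarrow> n > 0 \<Longrightarrow> f (m * n) = f m * f n"
  by (simp add: multiplicative_fn_def)

lemma bij_betw_mult_divisors_coprime:
  fixes m n :: nat
  assumes "coprime m n"
  shows "bij_betw (\<lambda>(a, b). a * b) ({a. a dvd m} \<times> {b. b dvd n}) {d. d dvd m * n}"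
proof (rule bij_betw_imageI)
  have factors_from_product: "a = gcd (a * b) m \<and> b = gcd (a * b) n"
    if "a dvd m" "b dvd n" for a b
  proof -
    have "coprime b m" "coprime a n"
      using that assms by (meson coprime_commute coprime_divisors dvd_refl)+
    then show ?thesis
      using that by (simp add: gcd_mult_left_right_cancel gcd_mult_left_left_cancel
          coprime_commute gcd_nat.absorb1)
  qed
  show "inj_on (\<lambda>(a, b). a * b) ({a. a dvd m} \<times> {b. b dvd n})"
  proof (rule inj_onI, clarsimp)
    fix a b c d :: nat
    assume "a dvd m" "b dvd n" "c dvd m" "d dvd n" "a * b = c * d"
    then show "a = c \<and> b = d" using factors_from_product by metis
  qed
  show "(\<lambda>(a, b). a * b) ` ({a. a dvd m} \<times> {b. b dvd n}) = {d. d dvd m * n}"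
    by (auto intro: mult_dvd_mono dest!: division_decomp)
qed

lemma sum_divisors_mult_coprime:
  fixes m n :: nat
  assumes "coprime m n"
  shows "(\<Sum>d\<in>{d. d dvd m * n}. h d) = (\<Sum>(a, b)\<in>{a. a dvd m} \<times> {b. b dvd n}. h (a * b))"
  using sum.reindex_bij_betw[OF bij_betw_mult_divisors_coprime[OF assms], of h]
  by (simp add: case_prod_unfold)

lemma mult_less_mult_divisors:
  fixes a b m n :: nat
  assumes "a dvd m" "b dvd n" "(a, b) \<noteq> (m, n)" "m > 0" "n > 0"
  shows "a * b < m * n"
proof -
  have "a \<le> m" "b \<le> n" "b > 0" using assms by (auto dest: dvd_imp_le)
  then have "a * b \<le> m * b" "m * b \<le> m * n" by simp_all
  moreover have "a * b \<noteq> m * b \<or> m * b \<noteq> m * n" using assms(3-4) \<open>b > 0\<close> by auto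
  ultimately show ?thesis by linarith
qed

lemma multiplicative_fn_div_mult:
  assumes "multiplicative_fn f" "coprime m n" "a dvd m" "b dvd n" "m > 0" "n > 0"
  shows "f (m * n div (a * b)) = f (m div a) * f (n div b)"
proof -
  have "m div a dvd m" "n div b dvd n"
    using assms(3,4) by (metis dvd_mult_div_cancel dvd_triv_right)+
  then have "coprime (m div a) (n div b)"
    using assms(2) coprime_divisors by blast
  moreover have "m div a > 0" "n div b > 0"
    using assms(3-6) by (auto simp: dvd_div_eq_0_iff)
  moreover have "m * n div (a * b) = (m div a) * (n div b)"
    using assms(3,4) by (simp add: div_mult_div_if_dvd)
  ultimately show ?thesis
    using multiplicative_fnD[OF assms(1)] by simp
qed

lemma dirichlet_sum_mult_coprime:
  assumes "multiplicative_fn f" "coprime m n" "m > 0" "n > 0"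
  shows "(\<Sum>d\<in>{d. d dvd m * n}. f (m * n div d) * g d)
    = (\<Sum>(a, b)\<in>{a. a dvd m} \<times> {b. b dvd n}. f (m div a) * f (n div b) * g (a * b))"
  unfolding sum_divisors_mult_coprime[OF assms(2)]
  using multiplicative_fn_div_mult[OF assms(1,2) _ _ assms(3,4)] by (intro sum.cong) auto

lemma sum_eq_imp_eq_at_point:
  fixes h k :: "'a \<Rightarrow> 'b::cancel_comm_monoid_add"
  assumes "finite A" "x \<in> A" "sum h A = sum k A" "\<And>y. y \<in> A - {x} \<Longrightarrow> h y = k y"
  shows "h x = k x"
proof -
  have "sum h (A - {x}) = sum k (A - {x})" using assms(4) by (rule sum.cong[OF refl])
  with assms(1-3) show ?thesis by (simp add: sum.remove)
qed

lemma multiplicative_dirichlet_inverse: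
  assumes f1: "f 1 = 1" and mult: "multiplicative_fn f" and inv: "is_dirichlet_inverse f g"
  shows "multiplicative_fn g"
  unfolding multiplicative_fn_def
proof (intro allI impI)
  fix m n :: nat
  show "m > 0 \<Longrightarrow> n > 0 \<Longrightarrow> coprime m n \<Longrightarrow> g (m * n) = g m * g n"
  proof (induction "m * n" arbitrary: m n rule: less_induct)
    case (less m n)
    show ?case
    proof (cases "m = 1 \<or> n = 1")
      case True
      then show ?thesis using dirichlet_inverse_1[OF f1 inv] by auto
    next
      case False
      with less.prems have "m > 1" "n > 1" by auto
      define D where "D = {a. a dvd m} \<times> {b. b dvd n}"
      define F where "F = (\<lambda>(a, b). f (m div a) * f (n div b) * g (a * b))"
      define P where "P = (\<lambda>(a, b). f (m div a) * f (n div b) * (g a * g b))"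
      (* Both 0 = epsilon(m n) and 0 = epsilon(m) epsilon(n) expand over pairs of divisors (a, b);
         by induction the summands agree except at (a, b) = (m, n), which forces the claim. *)
      have "sum F D = (\<Sum>d\<in>{d. d dvd m * n}. f (m * n div d) * g d)"
        unfolding D_def F_def using dirichlet_sum_mult_coprime[OF mult less.prems(3,1,2)] by simp
      also have "\<dots> = 0"
        using \<open>m > 1\<close> \<open>n > 1\<close> by (intro dirichlet_inverse_sum_eq_0[OF inv] less_1_mult)
      also have "0 = (\<Sum>a\<in>{a. a dvd m}. f (m div a) * g a) * (\<Sum>b\<in>{b. b dvd n}. f (n div b) * g b)"
        using dirichlet_inverse_sum_eq_0[OF inv] \<open>m > 1\<close> \<open>n > 1\<close> by simp
      also have "\<dots> = sum P D"
        unfolding D_def P_def by (simp add: sum_product sum.cartesian_product case_prod_unfold ac_simps)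
      finally have sums_eq: "sum F D = sum P D" .
      have agree_outside_mn: "F x = P x" if "x \<in> D - {(m, n)}" for x
      proof -
        obtain a b where ab: "x = (a, b)" by (cases x)
        with that have x: "a dvd m" "b dvd n" "(a, b) \<noteq> (m, n)" by (auto simp: D_def)
        have "a * b < m * n"
          using x less.prems(1,2) by (rule mult_less_mult_divisors)
        moreover have "coprime a b" "a > 0" "b > 0"
          using x less.prems by (auto intro: coprime_divisors dest: dvd_imp_le)
        ultimately show ?thesis using ab less.hyps by (simp add: F_def P_def)
      qed
      have "finite D" "(m, n) \<in> D" using less.prems by (simp_all add: D_def finite_divisors_nat)
      then have "F (m, n) = P (m, n)" using sums_eq agree_outside_mn by (rule sum_eq_imp_eq_at_point)
      then show ?thesis using f1 less.prems by (simp add: F_def P_def)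
    qed
  qed
qed

lemma proper_divisors_prime_power:
  fixes p :: nat
  assumes "prime p"
  shows "{d. d dvd p ^ k} - {p ^ k} = (\<lambda>j. p ^ j) ` {..<k}"
proof -
  have "p > 1" using assms prime_gt_1_nat by blast
  then show ?thesis
    using divides_primepow_nat[OF assms]
    by (force simp: le_less le_imp_power_dvd power_inject_exp)
qed

lemma dirichlet_inverse_prime_power:
  fixes p :: nat
  assumes "f 1 = 1" "is_dirichlet_inverse f g" "prime p" "k > 0"
  shows "g (p ^ k) = - (\<Sum>j<k. f (p ^ (k - j)) * g (p ^ j))"
proof -
  have p: "p > 1" using assms(3) prime_gt_1_nat by blast
  then have "p ^ k > 1" using assms(4) by (rule one_less_power)
  then have "g (p ^ k) = - (\<Sum>d\<in>(\<lambda>j. p ^ j) ` {..<k}. f (p ^ k div d) * g d)"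
    using dirichlet_inverse_recurrence[OF assms(1,2)] proper_divisors_prime_power[OF assms(3)]
    by simp
  also have "\<dots> = - (\<Sum>j<k. f (p ^ (k - j)) * g (p ^ j))"
    using p by (simp add: sum.reindex inj_on_def power_inject_exp power_diff)
  finally show ?thesis .
qed

lemma dirichlet_inverse_prime_power_bound:
  fixes p :: nat
  assumes f1: "f 1 = 1" and inv: "is_dirichlet_inverse f g" and "C \<ge> 0"
    and bound: "\<forall>n\<ge>2. \<bar>f n\<bar> \<le> C * real n powr \<gamma>" and p: "prime p"
  shows "\<bar>g (p ^ k)\<bar> \<le> real (p ^ k) powr \<gamma> * (1 + C) ^ k"
proof (induction k rule: less_induct)
  case (less k)
  show ?case
  proof (cases "k = 0")
    case True
    then show ?thesis using dirichlet_inverse_1[OF f1 inv] by simp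
  next
    case False
    then have "k > 0" by simp
    have p2: "p \<ge> 2" using p prime_ge_2_nat by blast
    have term_bound: "\<bar>f (p ^ (k - j)) * g (p ^ j)\<bar> \<le> C * real (p ^ k) powr \<gamma> * (1 + C) ^ j"
      if "j < k" for j
    proof -
      have "p ^ 1 \<le> p ^ (k - j)" using that p2 by (intro power_increasing) auto
      with p2 have "\<bar>f (p ^ (k - j))\<bar> \<le> C * real (p ^ (k - j)) powr \<gamma>"
        using bound[rule_format, of "p ^ (k - j)"] by simp
      moreover have "\<bar>g (p ^ j)\<bar> \<le> real (p ^ j) powr \<gamma> * (1 + C) ^ j" using less that by blast
      ultimately have "\<bar>f (p ^ (k - j)) * g (p ^ j)\<bar>
          \<le> C * real (p ^ (k - j)) powr \<gamma> * (real (p ^ j) powr \<gamma> * (1 + C) ^ j)"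
        unfolding abs_mult using \<open>C \<ge> 0\<close> by (intro mult_mono) auto
      also have "\<dots> = C * (real (p ^ (k - j)) * real (p ^ j)) powr \<gamma> * (1 + C) ^ j"
        by (simp add: powr_mult)
      also have "real (p ^ (k - j)) * real (p ^ j) = real (p ^ k)"
        using that by (simp flip: of_nat_mult power_add)
      finally show ?thesis .
    qed
    have "\<bar>g (p ^ k)\<bar> \<le> (\<Sum>j<k. \<bar>f (p ^ (k - j)) * g (p ^ j)\<bar>)"
      unfolding dirichlet_inverse_prime_power[OF f1 inv p \<open>k > 0\<close>] abs_minus_cancel by (rule sum_abs)
    also have "\<dots> \<le> (\<Sum>j<k. C * real (p ^ k) powr \<gamma> * (1 + C) ^ j)"
      using term_bound by (intro sum_mono) simp
    also have "\<dots> = real (p ^ k) powr \<gamma> * ((1 + C) ^ k - 1)"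
      by (simp add: power_diff_1_eq sum_distrib_left algebra_simps)
    also have "\<dots> \<le> real (p ^ k) powr \<gamma> * (1 + C) ^ k" by (simp add: mult_left_mono)
    finally show ?thesis .
  qed
qed

lemma one_plus_power_le_powr_log2:
  fixes x C :: real
  assumes "x \<ge> 2" "C \<ge> 0"
  shows "(1 + C) ^ k \<le> (x ^ k) powr (ln (1 + C) / ln 2)"
proof -
  let ?L = "ln (1 + C) / ln 2"
  have "1 + C = 2 powr ?L" using assms(2) by (simp add: powr_def)
  also have "\<dots> \<le> x powr ?L" using assms by (intro powr_mono2) auto
  finally have "(1 + C) ^ k \<le> (x powr ?L) ^ k" using assms(2) by (intro power_mono) auto
  also have "\<dots> = (x ^ k) powr ?L"
    using assms(1) by (simp add: powr_power powr_realpow[symmetric] powr_powr mult.commute)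
  finally show ?thesis .
qed

lemma multiplicative_bound_from_prime_powers:
  fixes g :: "nat \<Rightarrow> real"
  assumes "g 1 = 1" "multiplicative_fn g"
    and prime_powers: "\<And>p k. prime p \<Longrightarrow> k > 0 \<Longrightarrow> \<bar>g (p ^ k)\<bar> \<le> real (p ^ k) powr s"
  shows "n > 0 \<Longrightarrow> \<bar>g n\<bar> \<le> real n powr s"
proof (induction n rule: less_induct)
  case (less n)
  show ?case
  proof (cases "n = 1")
    case True
    then show ?thesis using assms(1) by simp
  next
    case False
    then obtain p where p: "prime p" "p dvd n" using prime_factor_nat by blast
    have "n \<noteq> 0" "\<not> is_unit p" using less.prems p(1) by (auto simp: not_prime_unit)
    then obtain m where decomp: "n = p ^ multiplicity p n * m" and "\<not> p dvd m"
      using multiplicity_decompose' by blast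
    define k where "k = multiplicity p n"
    have n: "n = p ^ k * m" unfolding k_def by (rule decomp)
    have "k > 0" using p \<open>n \<noteq> 0\<close> by (simp add: k_def prime_multiplicity_gt_zero_iff)
    then have "p ^ k > 1" using p(1) prime_gt_1_nat one_less_power by blast
    moreover have "m > 0" using less.prems n by (auto intro: Nat.gr0I)
    ultimately have "m < n" using n by simp
    have "coprime (p ^ k) m"
      using p(1) \<open>\<not> p dvd m\<close> by (simp add: prime_imp_coprime)
    then have "g (p ^ k * m) = g (p ^ k) * g m"
      using assms(2) \<open>m > 0\<close> p(1) by (intro multiplicative_fnD) (simp_all add: prime_gt_0_nat)
    then have "\<bar>g n\<bar> = \<bar>g (p ^ k)\<bar> * \<bar>g m\<bar>" using n by (simp add: abs_mult)
    also have "\<dots> \<le> real (p ^ k) powr s * real m powr s"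
      using prime_powers[OF p(1) \<open>k > 0\<close>] less.IH[OF \<open>m < n\<close> \<open>m > 0\<close>]
      by (intro mult_mono) auto
    also have "\<dots> = real n powr s" using n by (simp add: powr_mult)
    finally show ?thesis .
  qed
qed

theorem corollary3p3:
  fixes f g :: "nat \<Rightarrow> real" and C \<gamma> :: real
  assumes "f 1 = 1"
    and "multiplicative_fn f"
    and "C > 0"
    and "\<forall>n\<ge>2. \<bar>f n\<bar> \<le> C * real n powr \<gamma>"
    and "is_dirichlet_inverse f g"
  shows "\<forall>n\<ge>2. \<bar>g n\<bar> \<le> real n powr (\<gamma> + ln (1 + C) / ln 2)"
proof -
  let ?L = "ln (1 + C) / ln 2"
  have "\<bar>g (p ^ k)\<bar> \<le> real (p ^ k) powr (\<gamma> + ?L)" if "prime p" for p k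
  proof -
    have "\<bar>g (p ^ k)\<bar> \<le> real (p ^ k) powr \<gamma> * (1 + C) ^ k"
      using dirichlet_inverse_prime_power_bound[OF assms(1,5) less_imp_le[OF assms(3)] assms(4) that] .
    also have "\<dots> \<le> real (p ^ k) powr \<gamma> * real (p ^ k) powr ?L"
      using one_plus_power_le_powr_log2[of "real p" C k] that assms(3) prime_ge_2_nat[OF that]
      by (intro mult_left_mono) auto
    finally show ?thesis by (simp add: powr_add)
  qed
  then have "\<bar>g n\<bar> \<le> real n powr (\<gamma> + ?L)" if "n > 0" for n
    using multiplicative_bound_from_prime_powers[OF dirichlet_inverse_1[OF assms(1,5)]
        multiplicative_dirichlet_inverse[OF assms(1,2,5)]] that by blast
  then show ?thesis by simp
qed

end
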